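(* Let $p,q$ be positive integers with $2\le p/q<4$, let $f$ be a $(p,q)$-colouring of a graph $G$, and let $v$ be a vertex lying on a directed cycle of $D_f$ (i.e. in a nontrivial strongly connected component of $D_f$). Then $v$ is fixed: for every $(p,q)$-colouring $h$ obtainable from $f$ by a sequence of single-vertex recolourings (each intermediate map being a $(p,q)$-colouring), $h(v)=f(v)$.
   Context: A $(p,q)$-colouring of $G$ is a map $f:V(G)\to\{0,\dots,p-1\}$ with $q\le|f(u)-f(v)|\le p-q$ for every edge $uv$. $D_f$ is the digraph on $V(G)$ with an arc $\overrightarrow{xy}$ whenever $xy\in E(G)$ and $f(y)-f(x)\equiv q\pmod p$ (for $p=2q$ each edge yields a directed 2-cycle). *)

theory Defs
  imports Main
begin

definition simple_graph :: "'a set \<Rightarrow> ('a \<Rightarrow> 'a \<Rightarrow> bool) \<Rightarrow> bool" where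
  "simple_graph V E \<longleftrightarrow> finite V \<and> (\<forall>x y. E x y \<longrightarrow> x \<in> V \<and> y \<in> V \<and> x \<noteq> y \<and> E y x)"

definition pq_colouring :: "int \<Rightarrow> int \<Rightarrow> 'a set \<Rightarrow> ('a \<Rightarrow> 'a \<Rightarrow> bool) \<Rightarrow> ('a \<Rightarrow> int) \<Rightarrow> bool" where
  "pq_colouring p q V E f \<longleftrightarrow>
     (\<forall>v\<in>V. 0 \<le> f v \<and> f v < p) \<and>
     (\<forall>u v. E u v \<longrightarrow> q \<le> \<bar>f u - f v\<bar> \<and> \<bar>f u - f v\<bar> \<le> p - q)"

definition Df_arc :: "int \<Rightarrow> int \<Rightarrow> ('a \<Rightarrow> 'a \<Rightarrow> bool) \<Rightarrow> ('a \<Rightarrow> int) \<Rightarrow> 'a \<Rightarrow> 'a \<Rightarrow> bool" where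
  "Df_arc p q E f x y \<longleftrightarrow> E x y \<and> (f y - f x) mod p = q mod p"

definition recolour_step :: "int \<Rightarrow> int \<Rightarrow> 'a set \<Rightarrow> ('a \<Rightarrow> 'a \<Rightarrow> bool) \<Rightarrow> ('a \<Rightarrow> int) \<Rightarrow> ('a \<Rightarrow> int) \<Rightarrow> bool" where
  "recolour_step p q V E g g' \<longleftrightarrow>
     pq_colouring p q V E g \<and> pq_colouring p q V E g' \<and>
     (\<exists>u\<in>V. \<forall>x. x \<noteq> u \<longrightarrow> g' x = g x)"

end

theory Submission
  imports Defs
begin

text \<open>If \<open>w \<rightarrow> x \<rightarrow> y\<close> are arcs of \<open>D_f\<close>, then \<open>f w\<close>, \<open>f w + q\<close>, \<open>f w + 2q\<close> are the
  colours of \<open>w, x, y\<close> on the cycle \<open>\<int>/p\<close>. Since \<open>p < 4q\<close>, the only colour at cyclic distance at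
  least \<open>q\<close> from both \<open>f w\<close> and \<open>f w + 2q\<close> is \<open>f w + q\<close>, so a single-vertex recolouring cannot
  change \<open>x\<close>. Hence every arc lying on a cycle of \<open>D_f\<close> survives the recolouring, so \<open>v\<close> stays
  on a cycle of the new digraph and keeps its colour; induction over the recolouring sequence
  finishes the proof.\<close>

lemma mod_eq_mod_cases:
  fixes a p q :: int
  assumes "a mod p = q mod p" "0 < q" "q < p" "-p < a" "a < p"
  shows "a = q \<or> a = q - p"
proof -
  have q_mod: "q mod p = q" using assms by simp
  show ?thesis
  proof (cases "a \<ge> 0")
    case True
    then have "a mod p = a" using assms by simp
    then show ?thesis using assms q_mod by linarith
  next
    case False
    have "(a + p) mod p = a + p" using assms False by (intro mod_pos_pos_trivial) auto
    then have "a mod p = a + p" by simp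
    then show ?thesis using assms q_mod by linarith
  qed
qed

lemma Df_arc_colour_diff:
  assumes "simple_graph V E" "pq_colouring p q V E g" "Df_arc p q E g x y" "0 < q" "q < p"
  shows "g y - g x = q \<or> g y - g x = q - p"
proof -
  have "x \<in> V" "y \<in> V" and arc_mod: "(g y - g x) mod p = q mod p"
    using assms(1,3) by (auto simp: simple_graph_def Df_arc_def)
  then have "0 \<le> g x" "g x < p" "0 \<le> g y" "g y < p"
    using assms(2) by (auto simp: pq_colouring_def)
  then show ?thesis
    using arc_mod assms(4,5) by (intro mod_eq_mod_cases) auto
qed

text \<open>The colour \<open>c\<close> must keep cyclic distance at least \<open>q\<close> from \<open>a\<close> and from \<open>a + 2q\<close> (mod \<open>p\<close>);
  as \<open>p - 2q < 2q\<close>, only the midpoint \<open>b = a + q\<close> qualifies.\<close>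
lemma middle_colour_unique:
  fixes p q a b c d :: int
  assumes "0 < q" "p < 4 * q" "0 \<le> b" "b < p" "0 \<le> c" "c < p"
    and "b - a = q \<or> b - a = q - p" "d - b = q \<or> d - b = q - p"
    and "q \<le> \<bar>c - a\<bar>" "\<bar>c - a\<bar> \<le> p - q"
    and "q \<le> \<bar>c - d\<bar>" "\<bar>c - d\<bar> \<le> p - q"
  shows "c = b"
  using assms by smt

lemma recolouring_fixes_inner_vertex:
  assumes sg: "simple_graph V E"
    and q: "0 < q" "2 * q \<le> p" "p < 4 * q"
    and g: "pq_colouring p q V E g" and g': "pq_colouring p q V E g'"
    and agree: "\<forall>z. z \<noteq> u \<longrightarrow> g' z = g z"
    and arc_in: "Df_arc p q E g w x" and arc_out: "Df_arc p q E g x y"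
  shows "g' x = g x"
proof (cases "x = u")
  case True
  have "E w x" "E x y" using arc_in arc_out by (auto simp: Df_arc_def)
  then have V: "x \<in> V" "w \<noteq> x" "x \<noteq> y"
    using sg by (auto simp: simple_graph_def)
  have "g' w = g w" "g' y = g y" using agree True V by auto
  moreover have "q \<le> \<bar>g' w - g' x\<bar> \<and> \<bar>g' w - g' x\<bar> \<le> p - q"
    "q \<le> \<bar>g' x - g' y\<bar> \<and> \<bar>g' x - g' y\<bar> \<le> p - q"
    using g' \<open>E w x\<close> \<open>E x y\<close> unfolding pq_colouring_def by blast+
  moreover have "0 \<le> g x" "g x < p" "0 \<le> g' x" "g' x < p"
    using g g' V by (auto simp: pq_colouring_def)
  moreover have "g x - g w = q \<or> g x - g w = q - p" "g y - g x = q \<or> g y - g x = q - p"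
    using Df_arc_colour_diff[OF sg g] arc_in arc_out q by auto
  ultimately show ?thesis
    using q by (intro middle_colour_unique[of q p "g x" "g' x" "g w" "g y"])
      (auto simp: abs_minus_commute)
qed (use agree in simp)

lemma tranclp_closed_walk_transfer:
  assumes arcs: "\<And>x y. r x y \<Longrightarrow> r\<^sup>+\<^sup>+ y x \<Longrightarrow> r' x y"
    and cyc: "r\<^sup>+\<^sup>+ v v"
  shows "r'\<^sup>+\<^sup>+ v v"
proof -
  have "r\<^sup>+\<^sup>+ b v \<longrightarrow> r'\<^sup>+\<^sup>+ v b" if "r\<^sup>+\<^sup>+ v b" for b
    using that
  proof (induction rule: tranclp_induct)
    case (base y)
    then show ?case using arcs by blast
  next
    case (step y z)
    show ?case
    proof
      assume "r\<^sup>+\<^sup>+ z v"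
      then have "r\<^sup>+\<^sup>+ y v" "r\<^sup>+\<^sup>+ z y"
        using step.hyps tranclp_into_tranclp2 tranclp_trans by metis+
      then show "r'\<^sup>+\<^sup>+ v z"
        using step.IH arcs[OF step.hyps(2)] by (meson tranclp.trancl_into_trancl)
    qed
  qed
  then show ?thesis using cyc by blast
qed

lemma tranclp_has_last_arc: "r\<^sup>+\<^sup>+ a b \<Longrightarrow> \<exists>w. r w b"
  by (induction rule: tranclp_induct) auto

lemma recolour_step_keeps_cycle_vertex:
  assumes sg: "simple_graph V E"
    and q: "0 < q" "2 * q \<le> p" "p < 4 * q"
    and step: "recolour_step p q V E g g'"
    and cyc: "(Df_arc p q E g)\<^sup>+\<^sup>+ v v"
  shows "(Df_arc p q E g')\<^sup>+\<^sup>+ v v \<and> g' v = g v"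
proof -
  let ?D = "Df_arc p q E g"
  obtain u where g: "pq_colouring p q V E g" and g': "pq_colouring p q V E g'"
    and agree: "\<forall>z. z \<noteq> u \<longrightarrow> g' z = g z"
    using step unfolding recolour_step_def by blast
  have fixed: "g' x = g x" if closed: "?D\<^sup>+\<^sup>+ x x" for x
  proof -
    obtain w where "?D w x" using tranclp_has_last_arc[OF closed] by blast
    moreover obtain y where "?D x y" using tranclpD[OF closed] by blast
    ultimately show ?thesis
      using recolouring_fixes_inner_vertex[OF sg q g g' agree] by blast
  qed
  have "Df_arc p q E g' x y" if "?D x y" "?D\<^sup>+\<^sup>+ y x" for x y
  proof -
    have "?D\<^sup>+\<^sup>+ x x" "?D\<^sup>+\<^sup>+ y y"
      using that tranclp_into_tranclp2 tranclp.trancl_into_trancl by metis+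
    then show ?thesis using that(1) fixed by (simp add: Df_arc_def)
  qed
  then have "(Df_arc p q E g')\<^sup>+\<^sup>+ v v"
    using cyc by (rule tranclp_closed_walk_transfer)
  then show ?thesis using cyc fixed by blast
qed

theorem lemma2p8:
  fixes V :: "'a set" and E :: "'a \<Rightarrow> 'a \<Rightarrow> bool" and p q :: int
    and f h :: "'a \<Rightarrow> int" and v :: 'a
  assumes "simple_graph V E"
    and "q > 0" and "2 * q \<le> p" and "p < 4 * q"
    and "pq_colouring p q V E f"
    and "(Df_arc p q E f)\<^sup>+\<^sup>+ v v"
    and "(recolour_step p q V E)\<^sup>*\<^sup>* f h"
  shows "h v = f v"
proof -
  have "(Df_arc p q E h)\<^sup>+\<^sup>+ v v \<and> h v = f v"
    using assms(7)
  proof (induction rule: rtranclp_induct)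
    case base
    then show ?case using assms(6) by simp
  next
    case (step g g')
    then show ?case using recolour_step_keeps_cycle_vertex[OF assms(1-4) step(2)] by auto
  qed
  then show ?thesis by simp
qed

end
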